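(* Let $1<a_1<a_2$ be coprime integers and $S=\langle a_1,a_2\rangle$. For all $t\in(1,\infty)$, $\Delta_t(S)$ is dense in $[|a_1a_2P(t)|,a_2]$, i.e. $[|a_1a_2P(t)|,a_2]$ is contained in the closure of $\Delta_t(S)$.
   Context: $S=\{\lambda_1a_1+\lambda_2a_2:\lambda_1,\lambda_2\in\mathbb{N}_0\}$. For $t\in[1,\infty)$ and $(u,v)\in\mathbb{R}^2$, $\|(u,v)\|_t=(|u|^t+|v|^t)^{1/t}$. For $x\in S$, $Z(x)=\{(m,n)\in\mathbb{N}_0^2: ma_1+na_2=x\}$, $\mathscr{L}_t(x)=\{\|f\|_t: f\in Z(x)\}$, $\Delta_t(x)$ is the set of differences between consecutive elements of $\mathscr{L}_t(x)$ (in increasing order), and $\Delta_t(S)=\bigcup_{x\in S}\Delta_t(x)$. Define $\mu_t(r)=\left\|\left(\frac{1-r}{a_1},\frac{r}{a_2}\right)\right\|_t$ for $r\in[0,1]$, $r_0(t)=\min\{r\in[0,1]:\mu_t(r)=\frac{1}{a_2}\}$, and $P(t)=\mu_t'(r_0(t))$ (derivative in $r$). *)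

theory Defs
  imports "HOL-Analysis.Analysis"
begin

definition numsg :: "nat \<Rightarrow> nat \<Rightarrow> nat set" where
  "numsg a1 a2 = {l1 * a1 + l2 * a2 | l1 l2. True}"

definition tnorm :: "real \<Rightarrow> real \<times> real \<Rightarrow> real" where
  "tnorm t uv = (\<bar>fst uv\<bar> powr t + \<bar>snd uv\<bar> powr t) powr (1 / t)"

definition factorizations :: "nat \<Rightarrow> nat \<Rightarrow> nat \<Rightarrow> (nat \<times> nat) set" where
  "factorizations a1 a2 x = {(m, n). m * a1 + n * a2 = x}"

definition tlengths :: "real \<Rightarrow> nat \<Rightarrow> nat \<Rightarrow> nat \<Rightarrow> real set" where
  "tlengths t a1 a2 x = (\<lambda>(m, n). tnorm t (real m, real n)) ` factorizations a1 a2 x"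

definition consec_diffs :: "real set \<Rightarrow> real set" where
  "consec_diffs L = {b - a | a b. a \<in> L \<and> b \<in> L \<and> a < b \<and> \<not> (\<exists>c\<in>L. a < c \<and> c < b)}"

definition tdelta :: "real \<Rightarrow> nat \<Rightarrow> nat \<Rightarrow> nat \<Rightarrow> real set" where
  "tdelta t a1 a2 x = consec_diffs (tlengths t a1 a2 x)"

definition tdelta_S :: "real \<Rightarrow> nat \<Rightarrow> nat \<Rightarrow> real set" where
  "tdelta_S t a1 a2 = (\<Union>x\<in>numsg a1 a2. tdelta t a1 a2 x)"

definition mu :: "real \<Rightarrow> nat \<Rightarrow> nat \<Rightarrow> real \<Rightarrow> real" where
  "mu t a1 a2 r = tnorm t ((1 - r) / real a1, r / real a2)"

definition r0 :: "real \<Rightarrow> nat \<Rightarrow> nat \<Rightarrow> real" where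
  "r0 t a1 a2 = (LEAST r. r \<in> {0..1} \<and> mu t a1 a2 r = 1 / real a2)"

definition Pt :: "real \<Rightarrow> nat \<Rightarrow> nat \<Rightarrow> real" where
  "Pt t a1 a2 = deriv (mu t a1 a2) (r0 t a1 a2)"

end

(*
  For N > 0 the element a1 a2 N of S has exactly the factorizations (a2 (N - i), a1 i), i = 0..N,
  whose t-lengths are a1 a2 N mu(i/N).  As mu^t is convex, mu is quasi-convex on [0,1]; since
  mu(1) = 1/a2 < mu(u) for u < r0, this gives mu(r) <= mu(u) whenever u < r0 and u <= r <= 1.
  Hence, when (j+1)/N < r0, no length lies strictly between those at i = j + 1 and i = j, and their
  difference a1 a2 N (mu(j/N) - mu((j+1)/N)) lies in Delta_t(S).  This is -a1 a2 times a difference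
  quotient of mu over an interval of length 1/N; shrinking the interval to s in (0, r0) shows that
  -a1 a2 mu'(s) lies in the closure of Delta_t(S).  The function -a1 a2 mu' is continuous on [0, r0],
  equals a2 at 0 and -a1 a2 P(t) at r0, so the intermediate value theorem gives the interval.
*)
theory Submission
  imports Defs
begin

section \<open>Convexity, difference quotients and closures on the real line\<close>

lemma convex_on_cong:
  assumes f: "convex_on S f" and eq: "\<And>x. x \<in> S \<Longrightarrow> f x = g x"
  shows "convex_on S g"
proof (rule convex_onI)
  show S: "convex S"
    using f by (rule convex_on_imp_convex)
  fix l :: real and x y assume "0 < l" "l < 1" "x \<in> S" "y \<in> S"
  moreover from this have "(1 - l) *\<^sub>R x + l *\<^sub>R y \<in> S"
    using S by (simp add: convexD)
  ultimately show "g ((1 - l) *\<^sub>R x + l *\<^sub>R y) \<le> (1 - l) * g x + l * g y"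
    using convex_onD[OF f, of l x y] eq by simp
qed

lemma convex_on_affine_compose:
  fixes f :: "real \<Rightarrow> real"
  assumes f: "convex_on T f" and S: "convex S" and maps: "\<And>x. x \<in> S \<Longrightarrow> c * x + d \<in> T"
  shows "convex_on S (\<lambda>x. f (c * x + d))"
proof (rule convex_onI[OF _ S])
  fix l x y :: real assume "0 < l" "l < 1" "x \<in> S" "y \<in> S"
  then have "f ((1 - l) *\<^sub>R (c * x + d) + l *\<^sub>R (c * y + d)) \<le> (1 - l) * f (c * x + d) + l * f (c * y + d)"
    using maps by (intro convex_onD[OF f]) auto
  moreover have "(1 - l) *\<^sub>R (c * x + d) + l *\<^sub>R (c * y + d) = c * ((1 - l) *\<^sub>R x + l *\<^sub>R y) + d"
    by (simp add: algebra_simps)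
  ultimately show "f (c * ((1 - l) *\<^sub>R x + l *\<^sub>R y) + d) \<le> (1 - l) * f (c * x + d) + l * f (c * y + d)"
    by simp
qed

lemma convex_on_powr_nonneg:
  assumes "1 \<le> p"
  shows "convex_on {0::real..} (\<lambda>x. x powr p)"
proof (rule convex_onI)
  fix l x y :: real assume l: "0 < l" "l < 1" and xy: "x \<in> {0..}" "y \<in> {0..}"
  have scale: "(k * z) powr p \<le> k * z powr p" if "0 < k" "k < 1" "0 \<le> z" for k z :: real
  proof -
    have "k powr p \<le> k"
      using that assms by (intro powr_le_one_le) auto
    then show ?thesis
      using that by (simp add: powr_mult mult_right_mono)
  qed
  consider "x = 0" | "y = 0" | "0 < x" "0 < y"
    using xy by force
  then show "((1 - l) *\<^sub>R x + l *\<^sub>R y) powr p \<le> (1 - l) * x powr p + l * y powr p"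
  proof cases
    case 3
    then show ?thesis
      using convex_onD[OF powr_convex[OF assms], of l x y] l by simp
  qed (use scale l xy in auto)
qed (rule convex_real_interval)

lemma difference_quotient_tendsto:
  fixes u v :: "nat \<Rightarrow> real" and g G :: "real \<Rightarrow> real"
  assumes g_cont: "continuous_on {a..b} g"
    and g_deriv: "\<And>x. a < x \<Longrightarrow> x < b \<Longrightarrow> (g has_real_derivative G x) (at x)"
    and G_cont: "continuous (at s within {a..b}) G"
    and bounds: "\<And>n. a \<le> u n" "\<And>n. u n < v n" "\<And>n. v n \<le> b" "\<And>n. u n \<le> s" "\<And>n. s \<le> v n"
    and width: "(\<lambda>n. v n - u n) \<longlonglongrightarrow> 0"
  shows "(\<lambda>n. (g (v n) - g (u n)) / (v n - u n)) \<longlonglongrightarrow> G s"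
proof -
  have "\<exists>z. u n < z \<and> z < v n \<and> g (v n) - g (u n) = (v n - u n) * G z" for n
  proof -
    have "continuous_on {u n..v n} g"
      using g_cont by (rule continuous_on_subset) (use bounds in auto)
    moreover have "g differentiable (at x)" if "u n < x" "x < v n" for x
      using g_deriv[of x] that bounds[of n] by (auto simp: real_differentiable_def)
    ultimately obtain l z where "u n < z" "z < v n" "(g has_real_derivative l) (at z)"
        "g (v n) - g (u n) = (v n - u n) * l"
      using MVT[OF bounds(2)] by blast
    moreover have "l = G z"
      using DERIV_unique[OF \<open>(g has_real_derivative l) (at z)\<close> g_deriv[of z]] calculation bounds[of n]
      by auto
    ultimately show ?thesis
      by blast
  qed
  then obtain z where z: "\<And>n. u n < z n" "\<And>n. z n < v n"
      "\<And>n. g (v n) - g (u n) = (v n - u n) * G (z n)"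
    by metis
  have lower: "(\<lambda>n. s - (v n - u n)) \<longlonglongrightarrow> s" and upper: "(\<lambda>n. s + (v n - u n)) \<longlonglongrightarrow> s"
    using tendsto_diff[OF tendsto_const width] tendsto_add[OF tendsto_const width] by simp_all
  have bracket: "s - (v n - u n) \<le> z n" "z n \<le> s + (v n - u n)" for n
    using z(1,2)[of n] bounds(4,5)[of n] by linarith+
  have "z \<longlonglongrightarrow> s"
    by (rule tendsto_sandwich[OF _ _ lower upper]) (simp_all add: bracket)
  moreover have "z n \<in> {a..b}" for n
    using z(1,2)[of n] bounds(1,3)[of n] by simp
  ultimately have "(\<lambda>n. G (z n)) \<longlonglongrightarrow> G s"
    by (intro continuous_within_tendsto_compose'[OF G_cont])
  moreover have "(g (v n) - g (u n)) / (v n - u n) = G (z n)" for n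
    using z(3)[of n] bounds(2)[of n] by simp
  ultimately show ?thesis
    by simp
qed

lemma Icc_subset_closed_if_positive_values:
  fixes F :: "real \<Rightarrow> real"
  assumes D: "closed D" and F: "continuous_on {a..b} F" "a < b" "0 < F a"
    and inside: "\<And>s. a < s \<Longrightarrow> s < b \<Longrightarrow> 0 < F s \<Longrightarrow> F s \<in> D"
  shows "{\<bar>F b\<bar>..F a} \<subseteq> D"
proof -
  have "F a \<in> D"
  proof (rule Lim_in_closed_set[OF D _ _ continuous_on_Icc_at_rightD[OF F(1,2)]])
    have "\<forall>\<^sub>F s in at_right a. s \<in> {a<..<b} \<and> 0 < F s"
      using eventually_at_right_real[OF F(2)] order_tendstoD(1)[OF continuous_on_Icc_at_rightD[OF F(1,2)] F(3)]
      by eventually_elim simp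
    then show "\<forall>\<^sub>F s in at_right a. F s \<in> D"
      by eventually_elim (auto intro: inside)
  qed simp
  moreover have "y \<in> D" if y: "\<bar>F b\<bar> < y" "y < F a" for y
  proof -
    obtain s where "a \<le> s" "s \<le> b" "F s = y"
      using IVT2'[of F b y a] y F by fastforce
    moreover have "s \<noteq> a" "s \<noteq> b"
      using y \<open>F s = y\<close> by auto
    ultimately show ?thesis
      using inside[of s] y by fastforce
  qed
  then have "closure {\<bar>F b\<bar><..<F a} \<subseteq> D"
    using D by (intro closure_minimal) auto
  ultimately show ?thesis
  proof (cases "\<bar>F b\<bar> < F a")
    case False
    then have "{\<bar>F b\<bar>..F a} \<subseteq> {F a}"
      by auto
    with \<open>F a \<in> D\<close> show ?thesis
      by blast
  qed auto
qed

section \<open>The curve mu and the point r0\<close>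

lemma tnorm_scale:
  fixes k p q t :: real
  assumes "0 \<le> k" "0 < t"
  shows "tnorm t (k * p, k * q) = k * tnorm t (p, q)"
proof -
  have "\<bar>k * p\<bar> powr t + \<bar>k * q\<bar> powr t = k powr t * (\<bar>p\<bar> powr t + \<bar>q\<bar> powr t)"
    using assms by (simp add: abs_mult powr_mult distrib_left)
  moreover have "(k powr t) powr (1 / t) = k"
    using assms by (simp add: powr_powr)
  ultimately show ?thesis
    using assms by (simp add: tnorm_def powr_mult)
qed

lemma tnorm_zero_right: "0 < t \<Longrightarrow> tnorm t (p, 0) = \<bar>p\<bar>"
  by (simp add: tnorm_def powr_powr)

lemma tnorm_zero_left: "0 < t \<Longrightarrow> tnorm t (0, q) = \<bar>q\<bar>"
  by (simp add: tnorm_def powr_powr)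

lemma continuous_on_mu: "0 < t \<Longrightarrow> continuous_on A (mu t a1 a2)"
  unfolding mu_def tnorm_def divide_inverse[of _ "real a1"] divide_inverse[of _ "real a2"]
  by (intro continuous_on_powr' continuous_intros) auto

lemma mu_0: "0 < t \<Longrightarrow> mu t a1 a2 0 = 1 / real a1"
  by (simp add: mu_def tnorm_zero_right)

lemma mu_1: "0 < t \<Longrightarrow> mu t a1 a2 1 = 1 / real a2"
  by (simp add: mu_def tnorm_zero_left)

lemma mu_pos:
  assumes "0 < a1" "0 < a2" "r \<in> {0..1}"
  shows "0 < mu t a1 a2 r"
proof -
  have "0 < \<bar>(1 - r) / real a1\<bar> powr t + \<bar>r / real a2\<bar> powr t"
    using assms by (cases "r = 1") (auto intro: add_pos_nonneg add_nonneg_pos)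
  then show ?thesis
    by (simp add: mu_def tnorm_def)
qed

lemma convex_on_mu_powr:
  assumes "0 < a1" "0 < a2" "1 \<le> t"
  shows "convex_on {0..1} (\<lambda>r. mu t a1 a2 r powr t)"
proof (rule convex_on_cong)
  let ?\<phi> = "\<lambda>x::real. x powr t"
  show "convex_on {0..1} (\<lambda>r. ?\<phi> ((- 1 / a1) * r + 1 / a1) + ?\<phi> ((1 / a2) * r + 0))"
    using assms
    by (intro convex_on_add convex_on_affine_compose[OF convex_on_powr_nonneg]) (auto simp: field_simps)
  fix r :: real assume "r \<in> {0..1}"
  then show "?\<phi> ((- 1 / a1) * r + 1 / a1) + ?\<phi> ((1 / a2) * r + 0) = mu t a1 a2 r powr t"
    using assms by (simp add: mu_def tnorm_def powr_powr field_simps)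
qed

lemma mu_le_max:
  assumes "0 < a1" "0 < a2" "1 \<le> t" and "0 \<le> u" "u \<le> r" "r \<le> v" "v \<le> 1"
  shows "mu t a1 a2 r \<le> max (mu t a1 a2 u) (mu t a1 a2 v)"
proof (rule ccontr)
  let ?m = "mu t a1 a2"
  have "convex_on {u..v} (\<lambda>r. ?m r powr t)"
    using convex_on_mu_powr[OF assms(1-3)] by (rule convex_on_subset) (use assms in auto)
  then have "?m r powr t \<le> max (?m u powr t) (?m v powr t)"
    using assms by (intro convex_on_le_max) auto
  moreover assume "\<not> ?m r \<le> max (?m u) (?m v)"
  then have "?m u < ?m r" "?m v < ?m r"
    by auto
  then have "?m u powr t < ?m r powr t" "?m v powr t < ?m r powr t"
    using assms mu_pos[OF assms(1,2)] by (auto intro!: powr_less_mono2 less_imp_le)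
  ultimately show False
    by simp
qed

definition mu_deriv :: "real \<Rightarrow> nat \<Rightarrow> nat \<Rightarrow> real \<Rightarrow> real" where
  "mu_deriv t a1 a2 r = mu t a1 a2 r powr (1 - t) *
     ((r / real a2) powr (t - 1) / real a2 - ((1 - r) / real a1) powr (t - 1) / real a1)"

lemma has_real_derivative_mu:
  assumes "0 < a1" "0 < a2" "0 < t" "0 < r" "r < 1"
  shows "(mu t a1 a2 has_real_derivative mu_deriv t a1 a2 r) (at r)"
proof -
  define H where "H r = ((1 - r) / real a1) powr t + (r / real a2) powr t" for r
  have mu_H: "mu t a1 a2 x = H x powr (1 / t)" if "x \<in> {0<..<1}" for x
    using that by (simp add: mu_def tnorm_def H_def)
  have H_pos: "H r > 0"
    using assms by (simp add: H_def add_pos_pos)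
  have H_deriv: "(H has_real_derivative
      t * ((1 - r) / a1) powr (t - 1) * (- 1 / a1) + t * (r / a2) powr (t - 1) * (1 / a2)) (at r)"
  proof -
    have "((\<lambda>x. (1 - x) / a1) has_real_derivative - 1 / a1) (at r)"
         "((\<lambda>x. x / a2) has_real_derivative 1 / a2) (at r)"
      using assms by (auto intro!: derivative_eq_intros simp: field_simps)
    moreover have "0 < (1 - r) / a1" "0 < r / a2"
      using assms by auto
    ultimately show ?thesis
      unfolding H_def[abs_def] by (intro DERIV_add DERIV_chain2[OF has_real_derivative_powr])
  qed
  have "((\<lambda>x. H x powr (1 / t)) has_real_derivative
      1 / t * H r powr (1 / t - 1) * (t * ((1 - r) / a1) powr (t - 1) * (- 1 / a1) + t * (r / a2) powr (t - 1) * (1 / a2))) (at r)"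
    using DERIV_chain2[OF has_real_derivative_powr[OF H_pos] H_deriv] .
  moreover have "H r powr (1 / t - 1) = mu t a1 a2 r powr (1 - t)"
  proof -
    have "mu t a1 a2 r powr (1 - t) = H r powr (1 / t * (1 - t))"
      using assms by (simp only: mu_H greaterThanLessThan_iff powr_powr)
    also have "1 / t * (1 - t) = 1 / t - 1"
      using assms by (simp add: field_simps)
    finally show ?thesis ..
  qed
  moreover have "1 / t * X * (t * A * (- 1 / a1) + t * B * (1 / a2)) = X * (B / a2 - A / a1)" for X A B
    using assms by (simp add: field_simps)
  ultimately have "((\<lambda>x. H x powr (1 / t)) has_real_derivative mu_deriv t a1 a2 r) (at r)"
    unfolding mu_deriv_def by simp
  then show ?thesis
    by (rule has_field_derivative_transform_within_open[of _ _ _ "{0<..<1}"]) (use assms mu_H in auto)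
qed

lemma continuous_on_mu_deriv:
  assumes "0 < a1" "0 < a2" "1 < t"
  shows "continuous_on {0..1} (mu_deriv t a1 a2)"
proof -
  have "continuous_on {0..1} (\<lambda>r. mu t a1 a2 r powr (1 - t))"
  proof (rule continuous_on_powr'[OF continuous_on_mu continuous_on_const])
    show "\<forall>r\<in>{0..1}. 0 \<le> mu t a1 a2 r \<and> (mu t a1 a2 r = 0 \<longrightarrow> 0 < 1 - t)"
      using mu_pos[OF assms(1,2)] by (metis less_imp_le less_irrefl)
  qed (use assms in simp)
  moreover have "continuous_on {0..1} (\<lambda>r. (r / real a2) powr (t - 1))"
    using assms by (intro continuous_on_powr' continuous_intros) auto
  moreover have "continuous_on {0..1} (\<lambda>r. ((1 - r) / real a1) powr (t - 1))"
    using assms by (intro continuous_on_powr' continuous_intros) auto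
  ultimately show ?thesis
    unfolding mu_deriv_def using assms
    by (intro continuous_on_mult continuous_on_diff continuous_on_divide continuous_on_const) auto
qed

lemma mu_deriv_0:
  assumes "0 < a1" "1 < t"
  shows "mu_deriv t a1 a2 0 = - 1 / real a1"
proof -
  have "mu_deriv t a1 a2 0 = - ((1 / a1) powr (1 - t) * (1 / a1) powr (t - 1)) / a1"
    using assms by (simp add: mu_deriv_def mu_0)
  also have "(1 / real a1) powr (1 - t) * (1 / real a1) powr (t - 1) = 1"
    using assms by (simp add: powr_add[symmetric])
  finally show ?thesis
    by simp
qed

lemma mu_deriv_1:
  assumes "0 < a2" "1 < t"
  shows "mu_deriv t a1 a2 1 = 1 / real a2"
proof -
  have "mu_deriv t a1 a2 1 = (1 / a2) powr (1 - t) * (1 / a2) powr (t - 1) / a2"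
    using assms by (simp add: mu_deriv_def mu_1)
  also have "(1 / real a2) powr (1 - t) * (1 / real a2) powr (t - 1) = 1"
    using assms by (simp add: powr_add[symmetric])
  finally show ?thesis
    by simp
qed

lemma r0_least:
  assumes "0 < a2" "0 < t"
  shows "r0 t a1 a2 \<in> {0..1}" and "mu t a1 a2 (r0 t a1 a2) = 1 / real a2"
    and "\<And>r. r \<in> {0..1} \<Longrightarrow> mu t a1 a2 r = 1 / real a2 \<Longrightarrow> r0 t a1 a2 \<le> r"
proof -
  define Z where "Z = {r \<in> {0..1}. mu t a1 a2 r = 1 / real a2}"
  have "closed Z"
    unfolding Z_def using assms
    by (intro continuous_closed_preimage_constant continuous_on_mu) auto
  moreover have "bounded Z"
    unfolding Z_def by (rule bounded_subset[OF bounded_closed_interval]) auto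
  ultimately have "compact Z"
    by (simp add: compact_eq_bounded_closed)
  moreover have "1 \<in> Z"
    unfolding Z_def using assms by (simp add: mu_1)
  ultimately obtain z where z: "z \<in> Z" "\<And>r. r \<in> Z \<Longrightarrow> z \<le> r"
    using compact_attains_inf[of Z] by blast
  then have "r0 t a1 a2 = z"
    unfolding r0_def Z_def by (intro Least_equality) auto
  with z show "r0 t a1 a2 \<in> {0..1}" "mu t a1 a2 (r0 t a1 a2) = 1 / real a2"
    "\<And>r. r \<in> {0..1} \<Longrightarrow> mu t a1 a2 r = 1 / real a2 \<Longrightarrow> r0 t a1 a2 \<le> r"
    by (auto simp: Z_def)
qed

lemma mu_gt_before_r0:
  assumes "0 < a1" "a1 < a2" "0 < t" and u: "0 \<le> u" "u < r0 t a1 a2"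
  shows "1 / real a2 < mu t a1 a2 u"
proof (rule ccontr)
  assume "\<not> 1 / real a2 < mu t a1 a2 u"
  moreover have "1 / real a2 \<le> mu t a1 a2 0"
    using assms by (simp add: mu_0 frac_le)
  moreover have "continuous_on {0..u} (mu t a1 a2)"
    using assms by (intro continuous_on_mu)
  ultimately obtain x where "0 \<le> x" "x \<le> u" "mu t a1 a2 x = 1 / real a2"
    using IVT2'[of "mu t a1 a2" u "1 / real a2" 0] u by auto
  moreover have "u \<le> 1"
    using r0_least(1)[of a2 t a1] assms by auto
  ultimately have "r0 t a1 a2 \<le> x"
    using r0_least(3)[of a2 t x a1] assms by auto
  with \<open>x \<le> u\<close> u show False
    by simp
qed

lemma r0_pos:
  assumes "0 < a1" "a1 < a2" "0 < t"
  shows "0 < r0 t a1 a2"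
proof -
  have "r0 t a1 a2 \<in> {0..1}" "mu t a1 a2 (r0 t a1 a2) = 1 / real a2"
    using r0_least(1,2)[of a2 t a1] assms by auto
  moreover have "mu t a1 a2 0 \<noteq> 1 / real a2"
    using assms by (simp add: mu_0)
  ultimately show ?thesis
    by (cases "r0 t a1 a2 = 0") auto
qed

lemma r0_less_1:
  assumes "0 < a1" "a1 < a2" "1 < t"
  shows "r0 t a1 a2 < 1"
proof -
  let ?u = "\<lambda>n. 1 - inverse (real (Suc n))"
  have "(\<lambda>n. (mu t a1 a2 1 - mu t a1 a2 (?u n)) / (1 - ?u n)) \<longlonglongrightarrow> mu_deriv t a1 a2 1"
  proof (rule difference_quotient_tendsto[where a = 0 and b = 1 and s = 1 and v = "\<lambda>n. 1"
        and g = "mu t a1 a2" and G = "mu_deriv t a1 a2"])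
    show "continuous (at 1 within {0..1}) (mu_deriv t a1 a2)"
      using continuous_on_mu_deriv assms by (simp add: continuous_on_eq_continuous_within)
    show "(\<lambda>n. 1 - ?u n) \<longlonglongrightarrow> 0"
      using LIMSEQ_inverse_real_of_nat by simp
  qed (use assms in \<open>auto intro: continuous_on_mu has_real_derivative_mu simp: field_simps\<close>)
  moreover have "0 < mu_deriv t a1 a2 1"
    using assms by (simp add: mu_deriv_1)
  ultimately have "\<forall>\<^sub>F n in sequentially. 0 < (mu t a1 a2 1 - mu t a1 a2 (?u n)) / (1 - ?u n)"
    by (rule order_tendstoD(1))
  then obtain n where "0 < (mu t a1 a2 1 - mu t a1 a2 (?u n)) / (1 - ?u n)"
    using eventually_sequentially by auto
  then have "mu t a1 a2 (?u n) < 1 / real a2"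
    using assms by (simp add: mu_1 zero_less_divide_iff)
  moreover have "0 \<le> ?u n" "?u n < 1"
    by (simp_all add: inverse_le_1_iff)
  ultimately show ?thesis
    using mu_gt_before_r0[of a1 a2 t "?u n"] assms by (meson not_less less_le_trans less_asym)
qed

lemma mu_le_before_r0:
  assumes "0 < a1" "a1 < a2" "1 < t" and "0 \<le> u" "u < r0 t a1 a2" "u \<le> r" "r \<le> 1"
  shows "mu t a1 a2 r \<le> mu t a1 a2 u"
  using mu_le_max[of a1 a2 t u r 1] mu_gt_before_r0[of a1 a2 t u] assms by (simp add: mu_1)

lemma Pt_eq_mu_deriv:
  assumes "0 < a1" "a1 < a2" "1 < t"
  shows "Pt t a1 a2 = mu_deriv t a1 a2 (r0 t a1 a2)"
  unfolding Pt_def using assms r0_pos[of a1 a2 t] r0_less_1[of a1 a2 t]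
  by (intro DERIV_imp_deriv has_real_derivative_mu) auto

section \<open>Length gaps of the elements a1 a2 N\<close>

lemma factorizations_multiple:
  assumes "coprime a1 a2" "0 < a1" "0 < a2"
  shows "factorizations a1 a2 (a1 * a2 * N) = (\<lambda>i. (a2 * (N - i), a1 * i)) ` {..N}"
proof (intro equalityI subsetI)
  fix f assume "f \<in> factorizations a1 a2 (a1 * a2 * N)"
  then obtain m n where f: "f = (m, n)" and mn: "m * a1 + n * a2 = a1 * a2 * N"
    by (auto simp: factorizations_def)
  then have "a1 dvd n * a2"
    by (metis dvd_add_right_iff dvd_triv_left dvd_triv_right mult.assoc)
  then obtain i where i: "n = a1 * i"
    using assms(1) by (auto simp: coprime_dvd_mult_left_iff)
  with mn have "a1 * (m + a2 * i) = a1 * (a2 * N)"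
    by (simp add: algebra_simps)
  then have "m + a2 * i = a2 * N"
    using assms by simp
  moreover from this have "a2 * i \<le> a2 * N"
    by linarith
  ultimately have "i \<le> N" "m = a2 * (N - i)"
    using assms by (auto simp: diff_mult_distrib2)
  then show "f \<in> (\<lambda>i. (a2 * (N - i), a1 * i)) ` {..N}"
    using f i by auto
next
  fix f assume "f \<in> (\<lambda>i. (a2 * (N - i), a1 * i)) ` {..N}"
  then show "f \<in> factorizations a1 a2 (a1 * a2 * N)"
    by (auto simp: factorizations_def algebra_simps diff_mult_distrib2 diff_mult_distrib)
qed

lemma tlengths_multiple:
  assumes "coprime a1 a2" "0 < a1" "0 < a2" "0 < t" "0 < N"
  shows "tlengths t a1 a2 (a1 * a2 * N) =
    (\<lambda>i. real a1 * real a2 * real N * mu t a1 a2 (real i / real N)) ` {..N}"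
proof -
  let ?k = "real a1 * real a2 * real N"
  have "tnorm t (real (a2 * (N - i)), real (a1 * i)) = ?k * mu t a1 a2 (real i / real N)"
    if "i \<le> N" for i
  proof -
    have "real (a2 * (N - i)) = ?k * ((1 - real i / real N) / real a1)"
      "real (a1 * i) = ?k * ((real i / real N) / real a2)"
      using assms that by (simp_all add: of_nat_diff field_simps)
    then have "tnorm t (real (a2 * (N - i)), real (a1 * i)) =
        tnorm t (?k * ((1 - real i / real N) / real a1), ?k * ((real i / real N) / real a2))"
      by (simp only:)
    also have "\<dots> = ?k * mu t a1 a2 (real i / real N)"
      unfolding mu_def using assms by (intro tnorm_scale) auto
    finally show ?thesis .
  qed
  then show ?thesis
    unfolding tlengths_def factorizations_multiple[OF assms(1-3)] image_image
    by (intro image_cong) auto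
qed

lemma grid_gap_in_tdelta_S:
  assumes "coprime a1 a2" "0 < a1" "a1 < a2" "1 < t" and j: "j < N"
    and before_r0: "real (Suc j) / real N < r0 t a1 a2"
    and drop: "mu t a1 a2 (real (Suc j) / real N) < mu t a1 a2 (real j / real N)"
  shows "real a1 * real a2 * real N * (mu t a1 a2 (real j / real N) - mu t a1 a2 (real (Suc j) / real N))
    \<in> tdelta_S t a1 a2"
proof -
  define f where "f i = real a1 * real a2 * real N * mu t a1 a2 (real i / real N)" for i
  have L: "tlengths t a1 a2 (a1 * a2 * N) = f ` {..N}"
    unfolding f_def using assms by (intro tlengths_multiple) auto
  have k: "0 < real a1 * real a2 * real N"
    using assms by simp
  have early: "real i / real N < r0 t a1 a2" if "i \<le> Suc j" for i
    using before_r0 divide_right_mono[of "real i" "real (Suc j)" "real N"] that by simp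
  have "mu t a1 a2 (real j / real N) \<le> mu t a1 a2 (real i / real N)" if "i \<le> j" for i
    using assms that early[of i] by (intro mu_le_before_r0) (auto simp: divide_right_mono)
  moreover have "mu t a1 a2 (real i / real N) \<le> mu t a1 a2 (real (Suc j) / real N)"
    if "Suc j \<le> i" "i \<le> N" for i
    using assms that by (intro mu_le_before_r0) (auto simp: divide_right_mono)
  ultimately have gap: "f i \<le> f (Suc j) \<or> f j \<le> f i" if "i \<le> N" for i
    unfolding f_def using k that by (cases "i \<le> j") (auto intro: mult_left_mono)
  have "f j - f (Suc j) \<in> consec_diffs (f ` {..N})"
    unfolding consec_diffs_def using drop k j gap
    by (fastforce simp: f_def intro!: mult_strict_left_mono)
  moreover have "a1 * a2 * N \<in> numsg a1 a2"
    unfolding numsg_def by (intro CollectI exI[of _ "a2 * N"] exI[of _ 0]) (simp add: algebra_simps)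
  ultimately show ?thesis
    unfolding tdelta_S_def tdelta_def L[symmetric] f_def right_diff_distrib by blast
qed

lemma neg_mu_deriv_in_closure_tdelta_S:
  assumes "coprime a1 a2" "0 < a1" "a1 < a2" "1 < t"
    and s: "0 < s" "s < r0 t a1 a2" and neg: "mu_deriv t a1 a2 s < 0"
  shows "- (real a1 * real a2 * mu_deriv t a1 a2 s) \<in> closure (tdelta_S t a1 a2)"
proof -
  let ?c = "real a1 * real a2"
  have "s < 1"
    using s r0_less_1[of a1 a2 t] assms by simp
  define j where "j n = nat \<lfloor>s * real (Suc n)\<rfloor>" for n
  define u where "u n = real (j n) / real (Suc n)" for n
  define v where "v n = real (Suc (j n)) / real (Suc n)" for n
  define Q where "Q n = (mu t a1 a2 (v n) - mu t a1 a2 (u n)) / (v n - u n)" for n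
  have j: "real (j n) \<le> s * real (Suc n)" "s * real (Suc n) < real (Suc (j n))" for n
    using s real_of_int_floor_add_one_gt[of "s * real (Suc n)"] unfolding j_def
    by (simp_all add: of_nat_nat del: real_of_int_floor_add_one_gt)
  then have u_le: "u n \<le> s" and v_gt: "s < v n" for n
    unfolding u_def v_def by (simp_all add: divide_le_eq less_divide_eq mult.commute)
  have width: "v n - u n = inverse (real (Suc n))" for n
    unfolding u_def v_def by (simp add: field_simps)
  have jN: "j n < Suc n" for n
  proof -
    have "s * real (Suc n) < real (Suc n)"
      using \<open>s < 1\<close> by simp
    with j(1)[of n] show ?thesis
      by (simp only: of_nat_less_iff[symmetric])
  qed
  have v_le: "v n \<le> 1" for n
    using jN[of n] unfolding v_def by simp
  have "Q \<longlonglongrightarrow> mu_deriv t a1 a2 s"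
    unfolding Q_def
  proof (rule difference_quotient_tendsto[where a = 0 and b = 1 and g = "mu t a1 a2" and G = "mu_deriv t a1 a2"])
    show "continuous (at s within {0..1}) (mu_deriv t a1 a2)"
      using continuous_on_mu_deriv assms \<open>s < 1\<close> s by (simp add: continuous_on_eq_continuous_within)
    show "(\<lambda>n. v n - u n) \<longlonglongrightarrow> 0"
      unfolding width by (rule LIMSEQ_inverse_real_of_nat)
  qed (use assms u_le v_gt v_le in
      \<open>auto intro: continuous_on_mu has_real_derivative_mu less_imp_le order.strict_trans1 simp: u_def\<close>)
  then have "(\<lambda>n. - (?c * Q n)) \<longlonglongrightarrow> - (?c * mu_deriv t a1 a2 s)"
    by (intro tendsto_intros)
  moreover have "\<forall>\<^sub>F n in sequentially. - (?c * Q n) \<in> tdelta_S t a1 a2"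
  proof -
    have "\<forall>\<^sub>F n in sequentially. inverse (real (Suc n)) < r0 t a1 a2 - s"
      using s by (intro order_tendstoD(2)[OF LIMSEQ_inverse_real_of_nat]) simp
    moreover have "\<forall>\<^sub>F n in sequentially. Q n < 0"
      using \<open>Q \<longlonglongrightarrow> _\<close> neg by (rule order_tendstoD(2))
    ultimately show ?thesis
    proof eventually_elim
      case (elim n)
      then have "v n < r0 t a1 a2" "mu t a1 a2 (v n) < mu t a1 a2 (u n)"
        using u_le[of n] width[of n] by (auto simp: Q_def divide_less_0_iff)
      then have "?c * real (Suc n) * (mu t a1 a2 (u n) - mu t a1 a2 (v n)) \<in> tdelta_S t a1 a2"
        unfolding u_def v_def using assms jN[of n] by (intro grid_gap_in_tdelta_S) auto
      moreover have "?c * real (Suc n) * (mu t a1 a2 (u n) - mu t a1 a2 (v n)) = - (?c * Q n)"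
        unfolding Q_def width by (simp add: field_simps)
      ultimately show ?case
        by simp
    qed
  qed
  ultimately show ?thesis
    by (intro Lim_in_closed_set[OF closed_closure]) (auto intro: eventually_mono closure_subset[THEN subsetD])
qed

theorem proposition2:
  fixes a1 a2 :: nat and t :: real
  assumes "1 < a1" and "a1 < a2" and "coprime a1 a2" and "1 < t"
  shows "{\<bar>real a1 * real a2 * Pt t a1 a2\<bar> .. real a2} \<subseteq> closure (tdelta_S t a1 a2)"
proof -
  define F where "F s = - (real a1 * real a2 * mu_deriv t a1 a2 s)" for s
  have pos: "0 < a1" "0 < t"
    using assms by simp_all
  have "{\<bar>F (r0 t a1 a2)\<bar>..F 0} \<subseteq> closure (tdelta_S t a1 a2)"
  proof (rule Icc_subset_closed_if_positive_values[where F = F and a = 0 and b = "r0 t a1 a2"])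
    show "continuous_on {0..r0 t a1 a2} F"
      unfolding F_def using assms pos r0_less_1[of a1 a2 t]
      by (intro continuous_intros continuous_on_subset[OF continuous_on_mu_deriv]) auto
    show "0 < r0 t a1 a2"
      using assms pos by (intro r0_pos) auto
    show "0 < F 0"
      unfolding F_def using assms by (simp add: mu_deriv_0)
    show "F s \<in> closure (tdelta_S t a1 a2)" if "0 < s" "s < r0 t a1 a2" "0 < F s" for s
      unfolding F_def using assms pos that[unfolded F_def]
      by (intro neg_mu_deriv_in_closure_tdelta_S) (auto simp: mult_less_0_iff)
  qed simp
  moreover have "F 0 = real a2" "F (r0 t a1 a2) = - (real a1 * real a2 * Pt t a1 a2)"
    unfolding F_def using assms by (simp_all add: mu_deriv_0 Pt_eq_mu_deriv)
  ultimately show ?thesis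
    by simp
qed

end
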